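(* Consider the problem $(P_1)$: $\min_{x\in Q}\{f(x):\mathbf{A}x=b\}$, and its dual function $\varphi$. Assume: (i) for some $\nu\in[0,1]$ the subgradients $\nabla\varphi(\lambda)=b-\mathbf{A}x(\lambda)$ used by the algorithm satisfy $\|\nabla\varphi(\lambda)-\nabla\varphi(\lambda')\|_2\le M_\nu\|\lambda-\lambda'\|_2^\nu$ for all $\lambda,\lambda'$, with $M_\nu<\infty$; (ii) the dual problem $\min_{\lambda}\varphi(\lambda)$ has a solution $\lambda^*$ with $\|\lambda^*\|_2\le R$ for some $R>0$; (iii) there is no duality gap: $\min_{x\in Q}\{f(x):\mathbf{A}x=b\}=-\varphi(\lambda^* )$. Let $\varepsilon>0$. Then for every $k\ge1$ the points $\hat x^k\in Q$, $\eta^k$ generated by Algorithm PDUGDsDR satisfy $$\|\mathbf{A}\hat x^k-b\|_2\le\frac{2R}{A_k}+\frac{\varepsilon}{2R},\qquad|\varphi(\eta^k)+f(\hat x^k)|\le\frac{2R^2}{A_k}+\frac\varepsilon2,$$ where $$A_k\ge c_\nu\,\frac{k^{\frac{1+3\nu}{1+\nu}}\varepsilon^{\frac{1-\nu}{1+\nu}}}{2^{\frac{1+3\nu}{1+\nu}}M_\nu^{\frac{2}{1+\nu}}},\qquad c_\nu=\left[\frac{1+\nu}{1-\nu}\right]^{\frac{1-\nu}{1+\nu}}\ (\nu<1),\ c_1=1.$$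
   Context: $E$ is a finite-dimensional real vector space, $Q\subseteq E$ is a closed convex set, $f:Q\to\mathbb{R}$ is convex, $H$ is a finite-dimensional real Euclidean space (identified with its dual $\Lambda=H^*$, with norm $\|\cdot\|_2$), $\mathbf{A}:E\to H$ is linear and $b\in H$. The dual objective (to be minimized) is $$\varphi(\lambda)=\langle\lambda,b\rangle+\max_{x\in Q}\big(-f(x)-\langle\mathbf{A}^T\lambda,x\rangle\big),\quad\lambda\in\Lambda,$$ where it is assumed that the maximum is attained for every $\lambda$; $x(\lambda)$ denotes a maximizer, and $b-\mathbf{A}x(\lambda)$ is then a subgradient of the convex function $\varphi$ at $\lambda$. Algorithm PDUGDsDR (input accuracy $\varepsilon>0$): set $A_0=0$, $\eta^0=\zeta^0=0$. For $k=0,1,2,\dots$: 1. $\beta_k\in\arg\min_{\beta\in[0,1]}\varphi(\zeta^k+\beta(\eta^k-\zeta^k))$, $\lambda^k=\zeta^k+\beta_k(\eta^k-\zeta^k)$. 2. Choose a maximizer $x(\lambda^k)$ such that $g^k:=\nabla\varphi(\lambda^k)=b-\mathbf{A}x(\lambda^k)$ satisfies $\langle g^k,\zeta^k-\lambda^k\rangle\ge0$ (such a choice exists). Let $h_{k+1}\in\arg\min_{h\ge0}\varphi(\lambda^k-hg^k)$ and $\eta^{k+1}=\lambda^k-h_{k+1}g^k$. 3. $a_{k+1}$ is the largest solution of $\varphi(\eta^{k+1})=\varphi(\lambda^k)-\frac{a_{k+1}^2}{2(A_k+a_{k+1})}\|g^k\|_2^2+\frac{\varepsilon a_{k+1}}{2(A_k+a_{k+1})}$;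 $A_{k+1}=A_k+a_{k+1}$. 4. $\zeta^{k+1}=\zeta^k-a_{k+1}g^k$. 5. $\hat x^{k+1}=\frac1{A_{k+1}}\sum_{i=0}^k a_{i+1}x(\lambda^i)$. All minima are assumed attained and $g^k\neq0$ for all iterations considered. *)

theory Defs
  imports "HOL-Analysis.Analysis"
begin

text \<open>Under the standing assumption that the maximum
  is attained, the supremum below is that maximum.\<close>
definition dual_obj :: "('e \<Rightarrow> real) \<Rightarrow> 'e set \<Rightarrow> ('e \<Rightarrow> 'h::real_inner) \<Rightarrow> 'h \<Rightarrow> 'h \<Rightarrow> real" where
  "dual_obj f Q A b lam = inner lam b + (SUP x\<in>Q. - f x - inner lam (A x))"

definition is_dual_maximizer :: "('e \<Rightarrow> real) \<Rightarrow> 'e set \<Rightarrow> ('e \<Rightarrow> 'h::real_inner) \<Rightarrow> 'h \<Rightarrow> 'e \<Rightarrow> bool" where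
  "is_dual_maximizer f Q A lam x \<longleftrightarrow>
     x \<in> Q \<and> (\<forall>y\<in>Q. - f y - inner lam (A y) \<le> - f x - inner lam (A x))"

text \<open>Power t^nu with the convention t^0 = 1 (also for t = 0).\<close>
definition hpow :: "real \<Rightarrow> real \<Rightarrow> real" where
  "hpow t nu = (if nu = 0 then 1 else t powr nu)"

definition c_nu :: "real \<Rightarrow> real" where
  "c_nu nu = (if nu < 1 then ((1 + nu) / (1 - nu)) powr ((1 - nu) / (1 + nu)) else 1)"

end

theory Submission
  imports Defs
begin

text \<open>
  Hoelder continuity of the subgradients gives the inexact quadratic upper model
  phi (l - w g) \<le> phi l - w |g|^2 / 2 + delta / 2 for every step length w \<le> holder_step nu M delta.
  With the exact line search this shows that every t with t^2 / (A_k + t) \<le> holder_step nu M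
  (eps t / (A_k + t)) lies below the largest root a_(k+1) of the step-3 equation; choosing t by
  concavity of x^gm, gm = (1 + nu) / (1 + 3 nu), gives A_(k+1)^gm \<ge> A_k^gm + gm (holder_step nu M eps)^gm,
  whence the growth of A_k.
  On the other side, the step-3 equation and the choice <g_k, zeta_k - lam_k> \<ge> 0 keep
  A_k phi (eta_k) - eps A_k / 2 below |l|^2 / 2 plus the weighted linear models of phi at the lam_i,
  and by Jensen's inequality these are at most - A_k (<l, A xhat_k - b> + f xhat_k).
  Taking |l| = 2 R along the residual, and weak duality against lamstar, gives both bounds.
\<close>

section \<open>Hoelder-smooth functions\<close>

lemma powr_diff_mean_value:
  fixes s t e :: real
  assumes "0 \<le> s" "s < t" "0 < e"
  obtains z where "s < z" "z < t" "t powr e - s powr e = (t - s) * (e * z powr (e - 1))"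
proof -
  have "continuous_on {s..t} (\<lambda>x. x powr e)"
    by (rule continuous_on_powr') (use assms in \<open>auto intro: continuous_intros\<close>)
  moreover have "(\<lambda>x. x powr e) differentiable (at x)" if "s < x" for x
    using has_real_derivative_powr[of x e] that assms real_differentiable_def by force
  ultimately obtain l z where z: "s < z" "z < t" "DERIV (\<lambda>x. x powr e) z :> l"
      "t powr e - s powr e = (t - s) * l"
    using MVT[OF assms(2)] by blast
  moreover have "l = e * z powr (e - 1)"
    using DERIV_unique[OF z(3) has_real_derivative_powr[of z e]] z assms by auto
  ultimately show ?thesis using that by blast
qed

lemma powr_one_plus_diff_ge:
  fixes s t nu :: real
  assumes "0 \<le> s" "s \<le> t" "0 \<le> nu"
  shows "(1 + nu) * (t - s) * s powr nu \<le> t powr (1 + nu) - s powr (1 + nu)"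
proof (cases "s = t")
  case False
  then obtain z where z: "s < z" "t powr (1 + nu) - s powr (1 + nu) = (t - s) * ((1 + nu) * z powr nu)"
    using powr_diff_mean_value[of s t "1 + nu"] assms by auto
  have "s powr nu \<le> z powr nu" using z assms by (intro powr_mono2) auto
  with z assms show ?thesis by (simp add: mult_left_mono mult.assoc)
qed simp

lemma powr_concave_diff_ge:
  fixes s t g :: real
  assumes "0 \<le> s" "s \<le> t" "0 < g" "g \<le> 1"
  shows "g * t powr (g - 1) * (t - s) \<le> t powr g - s powr g"
proof (cases "s = t")
  case False
  then obtain z where z: "s < z" "z < t" "t powr g - s powr g = (t - s) * (g * z powr (g - 1))"
    using powr_diff_mean_value[of s t g] assms by auto
  have "t powr (g - 1) \<le> z powr (g - 1)" using z assms by (intro powr_mono2') auto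
  with z assms show ?thesis by (simp add: mult.commute mult_left_mono)
qed simp

lemma endpoint_le_if_increments_le:
  fixes h p :: "real \<Rightarrow> real"
  assumes incr: "\<And>s t. 0 \<le> s \<Longrightarrow> s \<le> t \<Longrightarrow> t \<le> 1 \<Longrightarrow> h t - h s \<le> C * (t - s) * (p t - p s)"
  shows "h 1 \<le> h 0"
proof (rule LIMSEQ_le_const)
  show "(\<lambda>n. h 0 + C * (p 1 - p 0) / real n) \<longlonglongrightarrow> h 0"
    using tendsto_add[OF tendsto_const lim_const_over_n] by simp
  have "h 1 \<le> h 0 + C * (p 1 - p 0) / real n" if n: "n > 0" for n
  proof -
    have "h 1 - h 0 = (\<Sum>j<n. h (Suc j / n) - h (j / n))"
      using sum_lessThan_telescope[of "\<lambda>j. h (j / n)" n] n by simp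
    also have "\<dots> \<le> (\<Sum>j<n. C * (Suc j / n - j / n) * (p (Suc j / n) - p (j / n)))"
      using n by (intro sum_mono incr) (auto simp: divide_right_mono)
    also have "\<dots> = C / n * (\<Sum>j<n. p (Suc j / n) - p (j / n))"
      using n by (simp add: sum_distrib_left diff_divide_distrib[symmetric] mult.assoc)
    also have "(\<Sum>j<n. p (Suc j / n) - p (j / n)) = p 1 - p 0"
      using sum_lessThan_telescope[of "\<lambda>j. p (j / n)" n] n by simp
    finally show ?thesis by simp
  qed
  then show "\<exists>N. \<forall>n\<ge>N. h 1 \<le> h 0 + C * (p 1 - p 0) / real n"
    by (metis less_le_trans zero_less_one)
qed

lemma holder_descent:
  fixes \<phi> :: "'a::real_inner \<Rightarrow> real"
  assumes subgrad: "\<And>y z. \<phi> y + inner (G y) (z - y) \<le> \<phi> z"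
    and holder: "\<And>y. norm (G y - g) \<le> M * hpow (norm (y - x)) nu"
    and nu: "0 \<le> nu" and M: "0 \<le> M"
  shows "\<phi> (x + d) \<le> \<phi> x + inner g d + M / (1 + nu) * norm d powr (1 + nu)"
proof (cases "d = 0")
  case False
  define D where "D = norm d powr (1 + nu)"
  \<comment> \<open>The increments of h are of second order in t - s, so h cannot increase on [0, 1].\<close>
  define h where "h t = \<phi> (x + t *\<^sub>R d) - t * inner g d - M * D / (1 + nu) * t powr (1 + nu)" for t
  have "h t - h s \<le> M * D * (t - s) * (t powr nu - s powr nu)" if st: "0 \<le> s" "s \<le> t" for s t
  proof (cases "s = t")
    case False
    then have t: "0 < t" using st by simp
    have "\<phi> (x + t *\<^sub>R d) + inner (G (x + t *\<^sub>R d)) ((s - t) *\<^sub>R d) \<le> \<phi> (x + s *\<^sub>R d)"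
      using subgrad[of "x + t *\<^sub>R d" "x + s *\<^sub>R d"] by (simp add: algebra_simps)
    then have inc: "\<phi> (x + t *\<^sub>R d) - \<phi> (x + s *\<^sub>R d) \<le> (t - s) * inner (G (x + t *\<^sub>R d)) d"
      by (simp add: algebra_simps)
    have "inner (G (x + t *\<^sub>R d) - g) d \<le> norm (G (x + t *\<^sub>R d) - g) * norm d"
      by (rule norm_cauchy_schwarz)
    also have "\<dots> \<le> M * hpow (t * norm d) nu * norm d"
      using holder[of "x + t *\<^sub>R d"] t by (simp add: mult_right_mono)
    also have "\<dots> = M * t powr nu * D"
      using t False \<open>d \<noteq> 0\<close> by (simp add: hpow_def D_def powr_mult powr_add)
    finally have "inner (G (x + t *\<^sub>R d)) d \<le> inner g d + M * t powr nu * D"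
      by (simp add: inner_diff_left)
    then have "(t - s) * inner (G (x + t *\<^sub>R d)) d \<le> (t - s) * (inner g d + M * t powr nu * D)"
      using st by (intro mult_left_mono) auto
    with inc have "\<phi> (x + t *\<^sub>R d) - \<phi> (x + s *\<^sub>R d) \<le> (t - s) * (inner g d + M * t powr nu * D)"
      by linarith
    moreover have "M * D * ((t - s) * s powr nu) \<le> M * D / (1 + nu) * (t powr (1 + nu) - s powr (1 + nu))"
      using mult_left_mono[OF powr_one_plus_diff_ge[OF st nu], of "M * D / (1 + nu)"] M nu
      by (simp add: D_def)
    ultimately show ?thesis by (simp add: h_def algebra_simps)
  qed simp
  then have "h 1 \<le> h 0" by (rule endpoint_le_if_increments_le)
  then show ?thesis by (simp add: h_def D_def)
qed simp

text \<open>The reciprocal of the least L with M / (1 + nu) r^(1 + nu) \<le> L r^2 / 2 + delta / 2 for all r \<ge> 0.\<close>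
definition holder_step :: "real \<Rightarrow> real \<Rightarrow> real \<Rightarrow> real" where
  "holder_step nu M delta = c_nu nu * delta powr ((1 - nu) / (1 + nu)) / M powr (2 / (1 + nu))"

lemma holder_step_pos: "0 \<le> nu \<Longrightarrow> 0 < M \<Longrightarrow> 0 < delta \<Longrightarrow> 0 < holder_step nu M delta"
  by (simp add: holder_step_def c_nu_def)

lemma holder_step_mult:
  assumes "0 \<le> x" "0 \<le> delta"
  shows "holder_step nu M (delta * x) = holder_step nu M delta * x powr ((1 - nu) / (1 + nu))"
  using assms by (simp add: holder_step_def powr_mult)

lemma holder_step_powr_bound:
  fixes nu M delta w :: real
  assumes nu: "0 \<le> nu" "nu < 1" and M: "0 < M" and delta: "0 < delta" and w: "0 < w"
    and w_le: "w \<le> holder_step nu M delta"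
  shows "M * ((1 + nu) * w) powr ((1 + nu) / 2) \<le> (1 + nu) * (delta / (1 - nu)) powr ((1 - nu) / 2)"
proof -
  define al where "al = (1 + nu) / 2"
  define be where "be = (1 - nu) / 2"
  have al: "0 < al" "al + be = 1" using nu by (auto simp: al_def be_def field_simps)
  have "w powr al \<le> (c_nu nu * delta powr ((1 - nu) / (1 + nu)) / M powr (2 / (1 + nu))) powr al"
    using w_le w al unfolding holder_step_def by (intro powr_mono2) auto
  also have "\<dots> = ((1 + nu) / (1 - nu)) powr be * delta powr be / M"
  proof -
    have "(1 - nu) / (1 + nu) * al = be" "2 / (1 + nu) * al = 1"
      using nu by (simp_all add: al_def be_def field_simps)
    then show ?thesis
      using M delta nu by (simp add: c_nu_def powr_divide powr_mult powr_powr)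
  qed
  also have "\<dots> = (1 + nu) powr be * (delta / (1 - nu)) powr be / M"
    using nu delta by (simp add: powr_divide)
  finally have "(1 + nu) powr al * (M * w powr al) \<le> (1 + nu) powr al * (1 + nu) powr be * (delta / (1 - nu)) powr be"
    using M nu by (simp add: field_simps)
  then show ?thesis
    using nu w al by (simp add: al_def be_def powr_mult powr_add[symmetric] mult.left_commute)
qed

lemma holder_power_le_quadratic_plus:
  fixes nu M delta w r :: real
  assumes nu: "0 \<le> nu" "nu \<le> 1" and M: "0 < M" and delta: "0 < delta" and w: "0 < w" and r: "0 < r"
    and w_le: "w \<le> holder_step nu M delta"
  shows "M / (1 + nu) * r powr (1 + nu) \<le> r\<^sup>2 / (2 * w) + delta / 2"
proof (cases "nu = 1")
  case True
  then have "w \<le> 1 / M" using w_le delta M by (simp add: holder_step_def c_nu_def)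
  then have "M \<le> 1 / w" using M w by (simp add: field_simps)
  then have "M * r\<^sup>2 \<le> r\<^sup>2 / w" using mult_right_mono[of M "1 / w" "r\<^sup>2"] by simp
  then show ?thesis using True delta r by (simp add: powr_numeral)
next
  case False
  then have nu1: "nu < 1" using nu by simp
  define al where "al = (1 + nu) / 2"
  define be where "be = (1 - nu) / 2"
  \<comment> \<open>Chosen so that the bound al X + be Y of Young's inequality is r^2 / (2 w) + delta / 2.\<close>
  define X where "X = r\<^sup>2 / ((1 + nu) * w)"
  define Y where "Y = delta / (1 - nu)"
  have al: "0 \<le> al" "al + be = 1" and be: "0 \<le> be"
    using nu nu1 by (auto simp: al_def be_def field_simps)
  have X: "0 < X" and Y: "0 < Y" using r w nu nu1 delta by (auto simp: X_def Y_def)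
  have "M * ((1 + nu) * w) powr al \<le> (1 + nu) * Y powr be"
    using holder_step_powr_bound[OF nu(1) nu1 M delta w w_le] by (simp add: al_def be_def Y_def)
  moreover have "0 < ((1 + nu) * w) powr al" using nu w by simp
  ultimately have "M / (1 + nu) \<le> Y powr be / ((1 + nu) * w) powr al"
    by (subst pos_le_divide_eq) (use nu in \<open>auto simp: field_simps\<close>)
  then have "M / (1 + nu) * r powr (1 + nu) \<le> Y powr be / ((1 + nu) * w) powr al * r powr (1 + nu)"
    by (rule mult_right_mono) simp
  also have "\<dots> = X powr al * Y powr be"
  proof -
    have "2 * al = 1 + nu" by (simp add: al_def)
    then show ?thesis using r by (simp add: X_def powr_divide powr_powr flip: powr_numeral)
  qed
  also have "\<dots> \<le> al * X + be * Y"
    using Youngs_inequality_0 X Y al be by auto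
  also have "al * X + be * Y = r\<^sup>2 / (2 * w) + delta / 2"
    using nu nu1 by (simp add: al_def be_def X_def Y_def, simp add: field_simps)
  finally show ?thesis .
qed

section \<open>The dual objective\<close>

lemma dual_obj_maximizer:
  assumes "is_dual_maximizer f Q A l x"
  shows "dual_obj f Q A b l = inner l b - f x - inner l (A x)"
proof -
  have "(SUP y\<in>Q. - f y - inner l (A y)) = - f x - inner l (A x)"
    using assms unfolding is_dual_maximizer_def by (intro cSup_eq_maximum) auto
  then show ?thesis by (simp add: dual_obj_def)
qed

lemma dual_obj_ge:
  assumes "is_dual_maximizer f Q A l x" "y \<in> Q"
  shows "inner l b - f y - inner l (A y) \<le> dual_obj f Q A b l"
  using assms dual_obj_maximizer[OF assms(1), of b] unfolding is_dual_maximizer_def by force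

lemma dual_obj_subgradient:
  assumes "is_dual_maximizer f Q A l x"
    and "\<And>l'. \<exists>x'. is_dual_maximizer f Q A l' x'"
  shows "dual_obj f Q A b l + inner (b - A x) (l' - l) \<le> dual_obj f Q A b l'"
proof -
  obtain x' where "is_dual_maximizer f Q A l' x'" using assms(2) by blast
  moreover have "x \<in> Q" using assms(1) by (simp add: is_dual_maximizer_def)
  ultimately have "inner l' b - f x - inner l' (A x) \<le> dual_obj f Q A b l'"
    by (rule dual_obj_ge)
  then show ?thesis
    using dual_obj_maximizer[OF assms(1), of b]
    by (simp add: inner_diff_left inner_diff_right inner_commute)
qed

lemma dual_obj_holder_descent:
  assumes max_attained: "\<And>l. \<exists>x. is_dual_maximizer f Q A l x"
    and holder: "\<And>l l' x x'. is_dual_maximizer f Q A l x \<Longrightarrow> is_dual_maximizer f Q A l' x' \<Longrightarrow>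
        norm ((b - A x) - (b - A x')) \<le> M * hpow (norm (l - l')) nu"
    and "0 \<le> nu" "0 \<le> M"
    and x: "is_dual_maximizer f Q A l x"
  shows "dual_obj f Q A b (l + d)
    \<le> dual_obj f Q A b l + inner (b - A x) d + M / (1 + nu) * norm d powr (1 + nu)"
proof (rule holder_descent)
  define X where "X l' = (SOME x'. is_dual_maximizer f Q A l' x')" for l'
  have X: "is_dual_maximizer f Q A l' (X l')" for l'
    unfolding X_def by (rule someI_ex[OF max_attained])
  show "dual_obj f Q A b y + inner (b - A (X y)) (z - y) \<le> dual_obj f Q A b z" for y z
    by (rule dual_obj_subgradient[OF X max_attained])
  show "norm ((b - A (X y)) - (b - A x)) \<le> M * hpow (norm (y - l)) nu" for y
    by (rule holder[OF X x])
qed fact+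

section \<open>Growth of the step lengths\<close>

lemma largest_solution_ge:
  fixes A0 G eps PL PE t a :: real
  defines "psi x \<equiv> PL - x\<^sup>2 / (2 * (A0 + x)) * G + eps * x / (2 * (A0 + x))"
  assumes A0: "0 \<le> A0" and G: "0 < G" and eps: "0 < eps" and t: "0 < t"
    and le: "PE \<le> psi t"
    and largest: "\<And>x. A0 + x \<noteq> 0 \<Longrightarrow> PE = psi x \<Longrightarrow> x \<le> a"
  shows "t \<le> a"
proof -
  \<comment> \<open>For x \<ge> A0 we have psi x \<le> PL + eps / 2 - x G / 4, so psi B \<le> PE.\<close>
  define B where "B = max t (max A0 (4 * (PL - PE + eps / 2) / G))"
  have B: "t \<le> B" "A0 \<le> B" "4 * (PL - PE + eps / 2) / G \<le> B"
    unfolding B_def by auto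
  then have BG: "PL - PE + eps / 2 \<le> B * G / 4"
    using G by (simp add: pos_divide_le_eq)
  have "B / 4 \<le> B\<^sup>2 / (2 * (A0 + B))"
    using B A0 t by (simp add: field_simps power2_eq_square)
  then have "B / 4 * G \<le> B\<^sup>2 / (2 * (A0 + B)) * G"
    using G by (intro mult_right_mono) auto
  then have "B * G / 4 \<le> B\<^sup>2 / (2 * (A0 + B)) * G" by simp
  moreover have "eps * B / (2 * (A0 + B)) \<le> eps / 2"
    using B A0 t eps by (simp add: field_simps)
  ultimately have "psi B \<le> PE"
    using BG unfolding psi_def by linarith
  moreover have "\<forall>x. t \<le> x \<and> x \<le> B \<longrightarrow> isCont psi x"
    using A0 t unfolding psi_def by (auto intro!: continuous_intros)
  ultimately obtain x where "t \<le> x" "x \<le> B" "psi x = PE"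
    using IVT2[of psi B PE t] B le by blast
  with largest[of x] A0 t show ?thesis by fastforce
qed

lemma concave_increment_admissible:
  fixes nu K A0 S :: real
  defines "gm \<equiv> (1 + nu) / (1 + 3 * nu)" and "p \<equiv> (1 - nu) / (1 + nu)"
  assumes nu: "0 \<le> nu" "nu \<le> 1" and K: "0 < K" and A0: "0 \<le> A0" and S: "A0 < S"
    and S_powr: "S powr gm = A0 powr gm + gm * K powr gm"
  shows "(S - A0)\<^sup>2 / S \<le> K * ((S - A0) / S) powr p"
proof -
  define t where "t = S - A0"
  have t: "0 < t" and S0: "0 < S" using A0 S by (simp_all add: t_def)
  have gm: "0 < gm" "gm \<le> 1" and p: "0 \<le> p" using nu by (auto simp: gm_def p_def)
  have "2 - p = (1 + 3 * nu) / (1 + nu)"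
    using nu by (simp add: p_def field_simps)
  then have inv_gm: "1 / gm = 2 - p" by (simp add: gm_def)
  then have inv_gm': "(1 - gm) / gm = 1 - p" using gm by (simp add: diff_divide_distrib)
  have "gm * S powr (gm - 1) * t \<le> gm * K powr gm"
    using powr_concave_diff_ge[of A0 S gm] A0 S gm S_powr by (simp add: t_def)
  then have "S powr (gm - 1) * t \<le> K powr gm"
    using gm by (simp add: mult.assoc)
  have "t = S powr (1 - gm) * (S powr (gm - 1) * t)"
    using S0 by (simp add: mult.assoc[symmetric] powr_add[symmetric])
  also have "\<dots> \<le> S powr (1 - gm) * K powr gm"
    using \<open>S powr (gm - 1) * t \<le> K powr gm\<close> by (rule mult_left_mono) simp
  finally have "t \<le> K powr gm * S powr (1 - gm)"
    by (simp only: mult.commute)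
  then have "t powr (1 / gm) \<le> (K powr gm * S powr (1 - gm)) powr (1 / gm)"
    using t gm by (intro powr_mono2) auto
  then have t_pow: "t powr (2 - p) \<le> K * S powr (1 - p)"
    using K S0 gm by (simp add: powr_mult powr_powr inv_gm' inv_gm[symmetric])
  have "t\<^sup>2 / S = t powr (2 - p) * t powr p / S"
    using t by (simp add: powr_add[symmetric] flip: powr_numeral)
  also have "\<dots> \<le> K * S powr (1 - p) * t powr p / S"
    using t_pow S0 by (intro divide_right_mono mult_right_mono) auto
  also have "\<dots> = K * (t / S) powr p"
    using S0 t by (simp add: powr_divide powr_diff field_simps)
  finally show ?thesis by (simp add: t_def)
qed

lemma powr_growth_of_step:
  fixes nu M eps A0 a :: real
  defines "gm \<equiv> (1 + nu) / (1 + 3 * nu)"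
  assumes nu: "0 \<le> nu" "nu \<le> 1" and M: "0 < M" and eps: "0 < eps" and A0: "0 \<le> A0"
    and step: "\<And>t. 0 < t \<Longrightarrow> t\<^sup>2 / (A0 + t) \<le> holder_step nu M (eps * t / (A0 + t)) \<Longrightarrow> t \<le> a"
  shows "0 < a" and "A0 powr gm + gm * holder_step nu M eps powr gm \<le> (A0 + a) powr gm"
proof -
  define K where "K = holder_step nu M eps"
  have K: "0 < K" using holder_step_pos nu eps M by (simp add: K_def)
  have gm: "0 < gm" using nu by (simp add: gm_def)
  \<comment> \<open>S is the value A0 + a has to reach; concavity makes S - A0 an admissible step.\<close>
  define S where "S = (A0 powr gm + gm * K powr gm) powr (1 / gm)"
  have "0 < A0 powr gm + gm * K powr gm" using K gm by (simp add: add_nonneg_pos)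
  then have S: "0 < S" "S powr gm = A0 powr gm + gm * K powr gm"
    using gm by (simp_all add: S_def powr_powr)
  have "A0 < S"
  proof (rule ccontr)
    assume "\<not> A0 < S"
    then have "S powr gm \<le> A0 powr gm" using S gm by (intro powr_mono2) auto
    moreover have "0 < gm * K powr gm" using K gm by simp
    ultimately show False using S by simp
  qed
  have "(S - A0)\<^sup>2 / S \<le> K * ((S - A0) / S) powr ((1 - nu) / (1 + nu))"
    using concave_increment_admissible[OF nu K A0 \<open>A0 < S\<close>] S by (simp add: gm_def)
  also have "\<dots> = holder_step nu M (eps * (S - A0) / S)"
    using eps \<open>A0 < S\<close> S holder_step_mult[of "(S - A0) / S" eps nu M] by (simp add: K_def)
  finally have "S - A0 \<le> a"
    using step[of "S - A0"] \<open>A0 < S\<close> by simp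
  then show "0 < a" using \<open>A0 < S\<close> by simp
  have "S powr gm \<le> (A0 + a) powr gm"
    using \<open>S - A0 \<le> a\<close> S gm by (intro powr_mono2) auto
  then show "A0 powr gm + gm * holder_step nu M eps powr gm \<le> (A0 + a) powr gm"
    using S by (simp add: K_def)
qed

lemma lower_bound_of_powr_growth:
  fixes nu K Ak :: real and k :: nat
  defines "gm \<equiv> (1 + nu) / (1 + 3 * nu)"
  assumes nu: "0 \<le> nu" "nu \<le> 1" and K: "0 < K" and Ak: "0 \<le> Ak"
    and growth: "real k * (gm * K powr gm) \<le> Ak powr gm"
  shows "(real k / 2) powr ((1 + 3 * nu) / (1 + nu)) * K \<le> Ak"
proof -
  define s where "s = (1 + 3 * nu) / (1 + nu)"
  have gm: "0 < gm" "1 / 2 \<le> gm" and s: "0 < s"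
    using nu by (simp_all add: gm_def s_def field_simps)
  have gm_s: "gm * s = 1"
    using nu by (simp add: gm_def s_def)
  have "real k / 2 \<le> real k * gm"
    using mult_left_mono[OF gm(2), of "real k"] by simp
  then have "(real k / 2) powr s * K \<le> (real k * gm) powr s * K"
    using s K by (intro mult_right_mono powr_mono2) auto
  also have "\<dots> = (real k * (gm * K powr gm)) powr s"
    using K gm gm_s by (simp add: powr_mult powr_powr mult.assoc)
  also have "\<dots> \<le> (Ak powr gm) powr s"
    using growth gm K s by (intro powr_mono2) auto
  also have "\<dots> = Ak"
    using Ak gm_s by (simp add: powr_powr)
  finally show ?thesis by (simp add: s_def)
qed

section \<open>Estimate sequence\<close>

lemma norm_diff_scaleR_square:
  fixes u v :: "'a::real_inner"
  shows "(norm (v - c *\<^sub>R u))\<^sup>2 = (norm v)\<^sup>2 - 2 * c * inner u v + c\<^sup>2 * (norm u)\<^sup>2"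
  using dot_norm_neg[of v "c *\<^sub>R u"] by (simp add: power_mult_distrib inner_commute)

lemma estimate_sequence_bound:
  fixes phi :: "'h::real_inner \<Rightarrow> real" and Acap a :: "nat \<Rightarrow> real" and lam eta zeta g :: "nat \<Rightarrow> 'h"
  assumes init: "Acap 0 = 0" "zeta 0 = 0"
    and Acap_Suc: "\<And>k. Acap (Suc k) = Acap k + a (Suc k)"
    and a_nonneg: "\<And>k. 0 \<le> a (Suc k)"
    and lam_le_eta: "\<And>k. phi (lam k) \<le> phi (eta k)"
    and coupling: "\<And>k. 0 \<le> inner (g k) (zeta k - lam k)"
    and eta_Suc: "\<And>k. Acap (Suc k) * phi (eta (Suc k))
        = Acap (Suc k) * phi (lam k) - (a (Suc k))\<^sup>2 * (norm (g k))\<^sup>2 / 2 + eps * a (Suc k) / 2"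
    and zeta_Suc: "\<And>k. zeta (Suc k) = zeta k - a (Suc k) *\<^sub>R g k"
  shows "Acap k * phi (eta k) - eps * Acap k / 2 + (norm (l - zeta k))\<^sup>2 / 2
    \<le> (norm l)\<^sup>2 / 2 + (\<Sum>i<k. a (Suc i) * (phi (lam i) + inner (g i) (l - lam i)))"
proof (induction k)
  case 0
  then show ?case using init by simp
next
  case (Suc k)
  have "0 \<le> Acap k" by (induction k) (simp_all add: init Acap_Suc a_nonneg)
  have zeta_step: "(norm (l - zeta (Suc k)))\<^sup>2
      = (norm (l - zeta k))\<^sup>2 + 2 * a (Suc k) * inner (g k) (l - zeta k) + (a (Suc k))\<^sup>2 * (norm (g k))\<^sup>2"
    using norm_diff_scaleR_square[of "l - zeta k" "- a (Suc k)" "g k"] by (simp add: zeta_Suc algebra_simps)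
  have "Acap (Suc k) * phi (eta (Suc k)) - eps * Acap (Suc k) / 2 + (norm (l - zeta (Suc k)))\<^sup>2 / 2
      = Acap k * phi (lam k) - eps * Acap k / 2 + (norm (l - zeta k))\<^sup>2 / 2
        + a (Suc k) * (phi (lam k) + inner (g k) (l - zeta k))"
    by (simp only: eta_Suc zeta_step) (simp add: Acap_Suc field_simps)
  also have "\<dots> \<le> Acap k * phi (eta k) - eps * Acap k / 2 + (norm (l - zeta k))\<^sup>2 / 2
        + a (Suc k) * (phi (lam k) + inner (g k) (l - lam k))"
  proof -
    have "Acap k * phi (lam k) \<le> Acap k * phi (eta k)"
      using \<open>0 \<le> Acap k\<close> by (intro mult_left_mono lam_le_eta)
    moreover have "a (Suc k) * inner (g k) (l - zeta k) \<le> a (Suc k) * inner (g k) (l - lam k)"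
      using coupling[of k] by (intro mult_left_mono a_nonneg) (simp add: inner_diff_right)
    ultimately show ?thesis by (simp add: distrib_left)
  qed
  also have "\<dots> \<le> (norm l)\<^sup>2 / 2 + (\<Sum>i<Suc k. a (Suc i) * (phi (lam i) + inner (g i) (l - lam i)))"
    using Suc.IH by simp
  finally show ?case .
qed

lemma residual_and_gap_bounds:
  fixes r :: "'h::real_inner" and F Ak R eps :: real
  assumes Ak: "0 < Ak" and R: "0 < R"
    and upper: "\<And>l. Ak * F - eps * Ak / 2 \<le> (norm l)\<^sup>2 / 2 - Ak * inner l r"
    and lower: "- R * norm r \<le> F"
  shows "norm r \<le> 2 * R / Ak + eps / (2 * R)" and "\<bar>F\<bar> \<le> 2 * R\<^sup>2 / Ak + eps / 2"
proof -
  define l where "l = (2 * R / norm r) *\<^sub>R r"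
  have "(norm l)\<^sup>2 \<le> 4 * R\<^sup>2" and "inner l r = 2 * R * norm r"
    using R by (auto simp: l_def power2_eq_square power2_norm_eq_inner[symmetric])
  then have "Ak * F - eps * Ak / 2 \<le> 2 * R\<^sup>2 - Ak * (2 * R * norm r)"
    using upper[of l] by simp
  then have F_le: "F \<le> 2 * R\<^sup>2 / Ak - 2 * R * norm r + eps / 2"
    using Ak by (simp add: field_simps)
  with lower have "R * norm r \<le> 2 * R\<^sup>2 / Ak + eps / 2" by simp
  then show "norm r \<le> 2 * R / Ak + eps / (2 * R)"
    using R by (simp add: field_simps power2_eq_square)
  have "0 \<le> R * norm r" using R by simp
  with F_le lower \<open>R * norm r \<le> _\<close> show "\<bar>F\<bar> \<le> 2 * R\<^sup>2 / Ak + eps / 2"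
    unfolding abs_le_iff by linarith
qed

section \<open>Analysis of the algorithm\<close>

text \<open>
  Of the two line searches only what the analysis uses is assumed:
  phi (lam k) \<le> phi (eta k) from step 1, and minimality of eta (Suc k) along - g k from step 2.
\<close>
locale pdugd =
  fixes f :: "'e::real_vector \<Rightarrow> real" and Q :: "'e set" and A :: "'e \<Rightarrow> 'h::real_inner" and b :: 'h
    and phi :: "'h \<Rightarrow> real" and nu M R eps :: real and lamstar :: 'h
    and Acap a :: "nat \<Rightarrow> real" and lam eta zeta g :: "nat \<Rightarrow> 'h" and xs xhat :: "nat \<Rightarrow> 'e"
  assumes phi_def: "phi = dual_obj f Q A b"
    and Q_convex: "convex Q" and f_convex: "convex_on Q f" and A_linear: "linear A"
    and max_attained: "\<And>l. \<exists>x. is_dual_maximizer f Q A l x"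
    and nu_range: "0 \<le> nu" "nu \<le> 1" and M_nonneg: "0 \<le> M"
    and holder: "\<And>l l' x x'. is_dual_maximizer f Q A l x \<Longrightarrow> is_dual_maximizer f Q A l' x' \<Longrightarrow>
        norm ((b - A x) - (b - A x')) \<le> M * hpow (norm (l - l')) nu"
    and R_pos: "0 < R" and lamstar_opt: "\<And>l. phi lamstar \<le> phi l" and lamstar_bound: "norm lamstar \<le> R"
    and eps_pos: "0 < eps"
    and init: "Acap 0 = 0" "zeta 0 = 0"
    and lam_le_eta: "\<And>k. phi (lam k) \<le> phi (eta k)"
    and xs_max: "\<And>k. is_dual_maximizer f Q A (lam k) (xs k)"
    and g_def: "\<And>k. g k = b - A (xs k)"
    and coupling: "\<And>k. 0 \<le> inner (g k) (zeta k - lam k)"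
    and g_nonzero: "\<And>k. g k \<noteq> 0"
    and eta_line_search: "\<And>k t. 0 \<le> t \<Longrightarrow> phi (eta (Suc k)) \<le> phi (lam k - t *\<^sub>R g k)"
    and a_solves: "\<And>k. Acap k + a (Suc k) \<noteq> 0 \<and>
        phi (eta (Suc k)) = phi (lam k) - (a (Suc k))\<^sup>2 / (2 * (Acap k + a (Suc k))) * (norm (g k))\<^sup>2
                            + eps * a (Suc k) / (2 * (Acap k + a (Suc k)))"
    and a_largest: "\<And>k t. Acap k + t \<noteq> 0 \<Longrightarrow>
        phi (eta (Suc k)) = phi (lam k) - t\<^sup>2 / (2 * (Acap k + t)) * (norm (g k))\<^sup>2
                            + eps * t / (2 * (Acap k + t)) \<Longrightarrow> t \<le> a (Suc k)"
    and Acap_Suc: "\<And>k. Acap (Suc k) = Acap k + a (Suc k)"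
    and zeta_Suc: "\<And>k. zeta (Suc k) = zeta k - a (Suc k) *\<^sub>R g k"
    and xhat_Suc: "\<And>k. xhat (Suc k) = (1 / Acap (Suc k)) *\<^sub>R (\<Sum>i\<le>k. a (Suc i) *\<^sub>R xs i)"
begin

lemma dual_descent:
  assumes "is_dual_maximizer f Q A l x"
  shows "phi (l + d) \<le> phi l + inner (b - A x) d + M / (1 + nu) * norm d powr (1 + nu)"
  unfolding phi_def by (rule dual_obj_holder_descent[OF max_attained holder nu_range(1) M_nonneg assms])

lemma descent_along_g:
  assumes "0 \<le> t"
  shows "phi (lam k - t *\<^sub>R g k)
    \<le> phi (lam k) - t * (norm (g k))\<^sup>2 + M / (1 + nu) * (t * norm (g k)) powr (1 + nu)"
  using dual_descent[OF xs_max, of k "- (t *\<^sub>R g k)"] assms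
  by (simp add: g_def[symmetric] power2_norm_eq_inner)

lemma M_pos: "0 < M"
proof (rule ccontr)
  assume "\<not> 0 < M"
  then have "M = 0" using M_nonneg by simp
  \<comment> \<open>Then phi decreases at least linearly along - g 0, which contradicts the existence of lamstar.\<close>
  define t where "t = (phi (lam 0) - phi lamstar + 1) / (norm (g 0))\<^sup>2"
  have "0 \<le> t" using lamstar_opt[of "lam 0"] by (simp add: t_def)
  then have "phi (lam 0 - t *\<^sub>R g 0) \<le> phi (lam 0) - t * (norm (g 0))\<^sup>2"
    using descent_along_g[of t 0] \<open>M = 0\<close> by simp
  also have "\<dots> < phi lamstar"
    using g_nonzero[of 0] by (simp add: t_def)
  finally show False using lamstar_opt by (meson not_le)
qed

lemma admissible_le_a:
  assumes A: "0 \<le> Acap k" and t: "0 < t"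
    and admissible: "t\<^sup>2 / (Acap k + t) \<le> holder_step nu M (eps * t / (Acap k + t))"
  shows "t \<le> a (Suc k)"
proof -
  define w where "w = t\<^sup>2 / (Acap k + t)"
  define delta where "delta = eps * t / (Acap k + t)"
  define G where "G = (norm (g k))\<^sup>2"
  have w: "0 < w" and G: "0 < G" and delta: "0 < delta"
    using A t g_nonzero[of k] eps_pos by (simp_all add: w_def G_def delta_def)
  have "M / (1 + nu) * (w * norm (g k)) powr (1 + nu) \<le> (w * norm (g k))\<^sup>2 / (2 * w) + delta / 2"
    using holder_power_le_quadratic_plus[OF nu_range M_pos delta w _ admissible[folded w_def delta_def]]
      w g_nonzero[of k] by simp
  also have "(w * norm (g k))\<^sup>2 / (2 * w) = w * G / 2"
    using w by (simp add: G_def power2_eq_square)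
  finally have "phi (lam k - w *\<^sub>R g k) \<le> phi (lam k) - w * G / 2 + delta / 2"
    using descent_along_g[of w k] w by (simp add: G_def)
  also have "\<dots> = phi (lam k) - t\<^sup>2 / (2 * (Acap k + t)) * G + eps * t / (2 * (Acap k + t))"
    by (simp add: w_def delta_def mult.commute)
  finally have "phi (eta (Suc k)) \<le> phi (lam k) - t\<^sup>2 / (2 * (Acap k + t)) * G + eps * t / (2 * (Acap k + t))"
    using eta_line_search[of w k] w by simp
  then show ?thesis
    using largest_solution_ge[OF A G eps_pos t] a_largest by (simp add: G_def)
qed

lemma a_pos_if_Acap_nonneg: "0 \<le> Acap k \<Longrightarrow> 0 < a (Suc k)"
  by (rule powr_growth_of_step(1)[OF nu_range M_pos eps_pos _ admissible_le_a])

lemma Acap_nonneg: "0 \<le> Acap k"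
proof (induction k)
  case (Suc k)
  then show ?case using a_pos_if_Acap_nonneg[OF Suc] by (simp add: Acap_Suc)
qed (simp add: init)

lemma a_pos: "0 < a (Suc k)"
  by (rule a_pos_if_Acap_nonneg[OF Acap_nonneg])

lemma Acap_pos: "0 < k \<Longrightarrow> 0 < Acap k"
  using Acap_nonneg a_pos by (cases k) (auto simp: Acap_Suc add_nonneg_pos)

lemma Acap_powr_growth:
  defines "gm \<equiv> (1 + nu) / (1 + 3 * nu)"
  shows "real k * (gm * holder_step nu M eps powr gm) \<le> Acap k powr gm"
proof (induction k)
  case (Suc k)
  have "Acap k powr gm + gm * holder_step nu M eps powr gm \<le> Acap (Suc k) powr gm"
    unfolding gm_def Acap_Suc
    by (rule powr_growth_of_step(2)[OF nu_range M_pos eps_pos Acap_nonneg admissible_le_a[OF Acap_nonneg]])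
  with Suc.IH show ?case by (simp add: algebra_simps)
qed (simp add: init)

lemma Acap_lower_bound:
  "c_nu nu * (real k powr ((1 + 3 * nu) / (1 + nu)) * eps powr ((1 - nu) / (1 + nu)))
     / (2 powr ((1 + 3 * nu) / (1 + nu)) * M powr (2 / (1 + nu))) \<le> Acap k"
proof -
  have "(real k / 2) powr ((1 + 3 * nu) / (1 + nu)) * holder_step nu M eps \<le> Acap k"
    using lower_bound_of_powr_growth[OF nu_range holder_step_pos Acap_nonneg Acap_powr_growth]
      nu_range M_pos eps_pos by simp
  then show ?thesis by (simp add: holder_step_def powr_divide ac_simps)
qed

lemma estimate_sequence:
  "Acap k * phi (eta k) - eps * Acap k / 2 + (norm (l - zeta k))\<^sup>2 / 2
    \<le> (norm l)\<^sup>2 / 2 + (\<Sum>i<k. a (Suc i) * (phi (lam i) + inner (g i) (l - lam i)))"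
proof (rule estimate_sequence_bound[OF init Acap_Suc _ lam_le_eta coupling _ zeta_Suc])
  show "0 \<le> a (Suc k)" for k using a_pos less_imp_le by blast
  fix k
  define S where "S = Acap k + a (Suc k)"
  have "S \<noteq> 0" and eta_eq: "phi (eta (Suc k))
      = phi (lam k) - (a (Suc k))\<^sup>2 / (2 * S) * (norm (g k))\<^sup>2 + eps * a (Suc k) / (2 * S)"
    using a_solves[of k] by (simp_all add: S_def)
  then show "Acap (Suc k) * phi (eta (Suc k))
      = Acap (Suc k) * phi (lam k) - (a (Suc k))\<^sup>2 * (norm (g k))\<^sup>2 / 2 + eps * a (Suc k) / 2"
    unfolding Acap_Suc S_def[symmetric] eta_eq by (simp add: field_simps)
qed

lemma Acap_eq_sum: "Acap k = (\<Sum>i<k. a (Suc i))"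
  by (induction k) (simp_all add: init Acap_Suc)

lemma xhat_eq_sum:
  assumes "0 < k"
  shows "xhat k = (\<Sum>i<k. (a (Suc i) / Acap k) *\<^sub>R xs i)"
  using assms by (cases k) (simp_all add: xhat_Suc lessThan_Suc_atMost scaleR_sum_right)

lemma xhat_weights:
  assumes "0 < k"
  shows "(\<Sum>i<k. a (Suc i) / Acap k) = 1" and "\<And>i. 0 \<le> a (Suc i) / Acap k"
  using Acap_pos[OF assms] a_pos[THEN less_imp_le]
  by (simp_all add: Acap_eq_sum sum_divide_distrib[symmetric])

lemma xs_mem: "xs k \<in> Q"
  using xs_max[of k] by (simp add: is_dual_maximizer_def)

lemma xhat_mem: "0 < k \<Longrightarrow> xhat k \<in> Q"
  unfolding xhat_eq_sum by (rule convex_sum[OF _ Q_convex xhat_weights]) (auto simp: xs_mem)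

lemma f_xhat_le: "0 < k \<Longrightarrow> Acap k * f (xhat k) \<le> (\<Sum>i<k. a (Suc i) * f (xs i))"
proof -
  assume k: "0 < k"
  then have "{..<k} \<noteq> {}" by (metis emptyE lessThan_iff)
  then have "f (xhat k) \<le> (\<Sum>i<k. a (Suc i) / Acap k * f (xs i))"
    unfolding xhat_eq_sum[OF k] by (intro convex_on_sum[OF _ _ f_convex xhat_weights[OF k]]) (auto simp: xs_mem)
  then show ?thesis
    using Acap_pos[OF k] by (simp add: sum_divide_distrib[symmetric] pos_le_divide_eq mult.commute)
qed

lemma weighted_g_sum: "0 < k \<Longrightarrow> (\<Sum>i<k. a (Suc i) *\<^sub>R g i) = - Acap k *\<^sub>R (A (xhat k) - b)"
proof -
  assume k: "0 < k"
  have "Acap k *\<^sub>R A (xhat k) = (\<Sum>i<k. a (Suc i) *\<^sub>R A (xs i))"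
    using Acap_pos[OF k] A_linear
    by (simp add: xhat_eq_sum[OF k] linear_sum linear_scale scaleR_sum_right)
  then show ?thesis
    by (simp add: g_def scaleR_diff_right sum_subtractf Acap_eq_sum scaleR_sum_left)
qed

lemma linear_models_le:
  assumes "0 < k"
  shows "(\<Sum>i<k. a (Suc i) * (phi (lam i) + inner (g i) (l - lam i)))
    \<le> - Acap k * inner l (A (xhat k) - b) - Acap k * f (xhat k)"
proof -
  have "phi (lam i) + inner (g i) (l - lam i) = inner l (g i) - f (xs i)" for i
    using dual_obj_maximizer[OF xs_max[of i], of b]
    by (simp add: phi_def g_def inner_diff_left inner_diff_right inner_commute)
  then have "(\<Sum>i<k. a (Suc i) * (phi (lam i) + inner (g i) (l - lam i)))
      = inner l (\<Sum>i<k. a (Suc i) *\<^sub>R g i) - (\<Sum>i<k. a (Suc i) * f (xs i))"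
    by (simp add: inner_sum_right right_diff_distrib sum_subtractf)
  then show ?thesis
    using weighted_g_sum[OF assms] f_xhat_le[OF assms] by simp
qed

lemma weak_duality_bound: "0 < k \<Longrightarrow> - R * norm (A (xhat k) - b) \<le> phi (eta k) + f (xhat k)"
proof -
  assume k: "0 < k"
  obtain x where x: "is_dual_maximizer f Q A lamstar x" using max_attained by blast
  have "inner lamstar b - f (xhat k) - inner lamstar (A (xhat k)) \<le> phi lamstar"
    unfolding phi_def by (rule dual_obj_ge[OF x xhat_mem[OF k]])
  also have "\<dots> \<le> phi (eta k)" by (rule lamstar_opt)
  finally have "- inner lamstar (A (xhat k) - b) \<le> phi (eta k) + f (xhat k)"
    by (simp add: inner_diff_right)
  moreover have "inner lamstar (A (xhat k) - b) \<le> R * norm (A (xhat k) - b)"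
    using norm_cauchy_schwarz[of lamstar] lamstar_bound by (meson mult_right_mono norm_ge_zero order_trans)
  ultimately show ?thesis by simp
qed

theorem residual_and_gap:
  assumes "0 < k"
  shows "norm (A (xhat k) - b) \<le> 2 * R / Acap k + eps / (2 * R)"
    and "\<bar>phi (eta k) + f (xhat k)\<bar> \<le> 2 * R\<^sup>2 / Acap k + eps / 2"
proof -
  have "Acap k * (phi (eta k) + f (xhat k)) - eps * Acap k / 2
      \<le> (norm l)\<^sup>2 / 2 - Acap k * inner l (A (xhat k) - b)" for l
    using estimate_sequence[of k l] linear_models_le[OF assms, of l] zero_le_power2[of "norm (l - zeta k)"]
    by (simp add: algebra_simps; linarith)
  note bounds = residual_and_gap_bounds[OF Acap_pos[OF assms] R_pos this weak_duality_bound[OF assms]]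
  show "norm (A (xhat k) - b) \<le> 2 * R / Acap k + eps / (2 * R)" by (rule bounds(1))
  show "\<bar>phi (eta k) + f (xhat k)\<bar> \<le> 2 * R\<^sup>2 / Acap k + eps / 2" by (rule bounds(2))
qed

end

theorem mainTheorem13:
  fixes Q :: "'e::euclidean_space set"
    and f :: "'e \<Rightarrow> real"
    and A :: "'e \<Rightarrow> 'h::euclidean_space"
    and b :: 'h
    and nu M R eps :: real
    and lamstar :: 'h
    and beta h a Acap :: "nat \<Rightarrow> real"
    and lam eta zeta g :: "nat \<Rightarrow> 'h"
    and xs xhat :: "nat \<Rightarrow> 'e"
  defines "phi \<equiv> dual_obj f Q A b"
  assumes Q_closed: "closed Q" and Q_convex: "convex Q"
    and f_convex: "convex_on Q f"
    and A_linear: "linear A"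
    and max_attained: "\<And>l. \<exists>x. is_dual_maximizer f Q A l x"
    \<comment> \<open>(i) Hoelder continuity of the subgradients b - A x(lam)\<close>
    and nu_range: "0 \<le> nu" "nu \<le> 1"
    and M_nonneg: "0 \<le> M"
    and holder: "\<And>l l' x x'. is_dual_maximizer f Q A l x \<Longrightarrow> is_dual_maximizer f Q A l' x' \<Longrightarrow>
        norm ((b - A x) - (b - A x')) \<le> M * hpow (norm (l - l')) nu"
    \<comment> \<open>(ii) dual solution bounded by R\<close>
    and R_pos: "0 < R"
    and lamstar_opt: "\<And>l. phi lamstar \<le> phi l"
    and lamstar_bound: "norm lamstar \<le> R"
    \<comment> \<open>(iii) no duality gap\<close>
    and no_gap: "\<exists>x\<in>Q. A x = b \<and> (\<forall>y\<in>Q. A y = b \<longrightarrow> f x \<le> f y) \<and> f x = - phi lamstar"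
    and eps_pos: "0 < eps"
    \<comment> \<open>Algorithm PDUGDsDR\<close>
    and init: "Acap 0 = 0" "eta 0 = 0" "zeta 0 = 0"
    and step1: "\<And>k. beta k \<in> {0..1} \<and>
        (\<forall>t\<in>{0..1}. phi (zeta k + beta k *\<^sub>R (eta k - zeta k)) \<le> phi (zeta k + t *\<^sub>R (eta k - zeta k)))"
    and step1_lam: "\<And>k. lam k = zeta k + beta k *\<^sub>R (eta k - zeta k)"
    and step2_x: "\<And>k. is_dual_maximizer f Q A (lam k) (xs k)"
    and step2_g: "\<And>k. g k = b - A (xs k)"
    and step2_choice: "\<And>k. inner (g k) (zeta k - lam k) \<ge> 0"
    and g_nonzero: "\<And>k. g k \<noteq> 0"
    and step2_h: "\<And>k. h (Suc k) \<ge> 0 \<and>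
        (\<forall>t\<ge>0. phi (lam k - h (Suc k) *\<^sub>R g k) \<le> phi (lam k - t *\<^sub>R g k))"
    and step2_eta: "\<And>k. eta (Suc k) = lam k - h (Suc k) *\<^sub>R g k"
    and step3: "\<And>k. Acap k + a (Suc k) \<noteq> 0 \<and>
        phi (eta (Suc k)) = phi (lam k) - (a (Suc k))\<^sup>2 / (2 * (Acap k + a (Suc k))) * (norm (g k))\<^sup>2
                            + eps * a (Suc k) / (2 * (Acap k + a (Suc k)))"
    and step3_largest: "\<And>k t. Acap k + t \<noteq> 0 \<Longrightarrow>
        phi (eta (Suc k)) = phi (lam k) - t\<^sup>2 / (2 * (Acap k + t)) * (norm (g k))\<^sup>2
                            + eps * t / (2 * (Acap k + t)) \<Longrightarrow> t \<le> a (Suc k)"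
    and step3_A: "\<And>k. Acap (Suc k) = Acap k + a (Suc k)"
    and step4: "\<And>k. zeta (Suc k) = zeta k - a (Suc k) *\<^sub>R g k"
    and step5: "\<And>k. xhat (Suc k) = (1 / Acap (Suc k)) *\<^sub>R (\<Sum>i\<le>k. a (Suc i) *\<^sub>R xs i)"
  shows "\<forall>k\<ge>1. xhat k \<in> Q
      \<and> norm (A (xhat k) - b) \<le> 2 * R / Acap k + eps / (2 * R)
      \<and> \<bar>phi (eta k) + f (xhat k)\<bar> \<le> 2 * R\<^sup>2 / Acap k + eps / 2
      \<and> Acap k \<ge> c_nu nu * (real k powr ((1 + 3 * nu) / (1 + nu)) * eps powr ((1 - nu) / (1 + nu)))
                 / (2 powr ((1 + 3 * nu) / (1 + nu)) * M powr (2 / (1 + nu)))"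
proof -
  have lam_le_eta: "phi (lam k) \<le> phi (eta k)" for k
    using bspec[OF conjunct2[OF step1[of k]], of 1] by (simp add: step1_lam)
  have eta_line_search: "phi (eta (Suc k)) \<le> phi (lam k - t *\<^sub>R g k)" if "0 \<le> t" for k t
    using step2_h[of k] that by (simp add: step2_eta)
  interpret pdugd f Q A b phi nu M R eps lamstar Acap a lam eta zeta g xs xhat
    by (rule pdugd.intro; (fact | simp add: phi_def))
  show ?thesis
    using xhat_mem residual_and_gap Acap_lower_bound by (simp add: Suc_le_eq)
qed

end
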